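(* Suppose $M\in\mathbb{R}_+^{p\times q}$ is such that both $M$ and $M^T$ are slack matrices of polytopes. Then there exists a polytope $P$ with $0$ in the interior of $P$ such that $M$ is a slack matrix of $P$ and $M^T$ is a slack matrix of the polar $P^\circ=\{y: x^Ty\le 1 \text{ for all } x\in P\}$.
   Context: For a polytope $P\subseteq\mathbb{R}^n$ with $\dim(P)\ge 1$, a slack matrix of $P$ is any matrix $S=[\mathbb{1},V]\cdot[w,-W]^T\in\mathbb{R}^{p\times q}$ (so $S_{ij}=w_j-W_jv_i$, with $v_i$ the $i$th row of $V$ and $W_j$ the $j$th row of $W$), where $V\in\mathbb{R}^{p\times n}$ satisfies $P=\operatorname{conv}(\text{rows of }V)$ and $W\in\mathbb{R}^{q\times n}$, $w\in\mathbb{R}^q$ satisfy $P=\{x\in\mathbb{R}^n: Wx\le w\}$. A matrix is a slack matrix of a polytope if it is a slack matrix of some polytope of dimension at least one. *)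

theory Defs
  imports Complex_Main
begin

text \<open>Points of R^n are represented as functions nat => real vanishing at all
coordinates k >= n; the dimension n is a natural number so that it can be
quantified inside formulas. Matrices are functions nat => nat => real,
indexed by row i < p and column j < q.\<close>

definition Rn :: "nat \<Rightarrow> (nat \<Rightarrow> real) set" where
  "Rn n = {x. \<forall>k\<ge>n. x k = 0}"

definition conv_rows :: "nat \<Rightarrow> nat \<Rightarrow> (nat \<Rightarrow> nat \<Rightarrow> real) \<Rightarrow> (nat \<Rightarrow> real) set" where
  "conv_rows n p V = {x \<in> Rn n. \<exists>l :: nat \<Rightarrow> real. (\<forall>i<p. 0 \<le> l i) \<and> (\<Sum>i<p. l i) = 1 \<and>
      (\<forall>k<n. x k = (\<Sum>i<p. l i * V i k))}"

definition ineq_set :: "nat \<Rightarrow> nat \<Rightarrow> (nat \<Rightarrow> nat \<Rightarrow> real) \<Rightarrow> (nat \<Rightarrow> real) \<Rightarrow> (nat \<Rightarrow> real) set" where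
  "ineq_set n q W w = {x \<in> Rn n. \<forall>j<q. (\<Sum>k<n. W j k * x k) \<le> w j}"

text \<open>dim(P) >= 1 for a (convex) set P: P contains two distinct points.\<close>
definition dim_ge_1 :: "(nat \<Rightarrow> real) set \<Rightarrow> bool" where
  "dim_ge_1 P \<longleftrightarrow> (\<exists>x\<in>P. \<exists>y\<in>P. x \<noteq> y)"

text \<open>S (p x q) is a slack matrix of the polytope P in R^n:
  S = [1, V] [w, -W]^T with P = conv(rows of V) = {x. W x <= w}, and dim P >= 1.\<close>
definition is_slack_matrix_of ::
  "nat \<Rightarrow> (nat \<Rightarrow> real) set \<Rightarrow> nat \<Rightarrow> nat \<Rightarrow> (nat \<Rightarrow> nat \<Rightarrow> real) \<Rightarrow> bool" where
  "is_slack_matrix_of n P p q S \<longleftrightarrow> P \<subseteq> Rn n \<and> dim_ge_1 P \<and>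
     (\<exists>V W :: nat \<Rightarrow> nat \<Rightarrow> real. \<exists>w :: nat \<Rightarrow> real.
        P = conv_rows n p V \<and> P = ineq_set n q W w \<and>
        (\<forall>i<p. \<forall>j<q. S i j = w j - (\<Sum>k<n. W j k * V i k)))"

definition is_slack_matrix :: "nat \<Rightarrow> nat \<Rightarrow> (nat \<Rightarrow> nat \<Rightarrow> real) \<Rightarrow> bool" where
  "is_slack_matrix p q S \<longleftrightarrow> (\<exists>n P. is_slack_matrix_of n P p q S)"

definition transp_mat :: "(nat \<Rightarrow> nat \<Rightarrow> real) \<Rightarrow> nat \<Rightarrow> nat \<Rightarrow> real" where
  "transp_mat M = (\<lambda>i j. M j i)"

definition polar :: "nat \<Rightarrow> (nat \<Rightarrow> real) set \<Rightarrow> (nat \<Rightarrow> real) set" where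
  "polar n P = {y \<in> Rn n. \<forall>x\<in>P. (\<Sum>k<n. x k * y k) \<le> 1}"

definition zero_in_interior :: "nat \<Rightarrow> (nat \<Rightarrow> real) set \<Rightarrow> bool" where
  "zero_in_interior n P \<longleftrightarrow>
     (\<exists>e>0. \<forall>x\<in>Rn n. sqrt (\<Sum>k<n. (x k)\<^sup>2) < e \<longrightarrow> x \<in> P)"

end

theory Submission
  imports Defs
begin

text \<open>Write M i j = w j - W j \<cdot> V i with P = conv(V) = {x. W x \<le> w}. A bounded polytope of
  positive dimension has (1, 0) in the row span of [w | W], so for every slack matrix S there is u
  with S u = 1. Applied to the transpose of M this gives weights c with c M = 1, and the point
  x0 = V c / (sum c) has all slacks w j - W j \<cdot> x0 equal to one number \<lambda> > 0. Translating by x0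
  yields P = conv(X) = {x. W x \<le> \<lambda>} with 0 in the interior and M i j = \<lambda> - W j \<cdot> X i.

  The polar {y. X y \<le> 1} contains conv(W / \<lambda>) because M \<ge> 0. Conversely, boundedness of P makes
  every y an affine combination \<alpha> of the rows of W / \<lambda>. The same combination of the vertices V'
  of a slack representation of the transpose of M has slacks \<lambda> (1 - X i \<cdot> y) \<ge> 0, hence is a
  convex combination \<mu> of V'. Then \<mu> applied to W / \<lambda> has the same inner products with all X i
  as y, and since the X i span (0 is interior) it equals y. So the polar is
  conv(W / \<lambda>) = {y. \<lambda> X y \<le> \<lambda>}, and its slack matrix is the transpose of M.\<close>

abbreviation dotp :: "nat \<Rightarrow> (nat \<Rightarrow> real) \<Rightarrow> (nat \<Rightarrow> real) \<Rightarrow> real" where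
  "dotp n x y \<equiv> \<Sum>k<n. x k * y k"

definition lincomb :: "nat \<Rightarrow> nat \<Rightarrow> (nat \<Rightarrow> real) \<Rightarrow> (nat \<Rightarrow> nat \<Rightarrow> real) \<Rightarrow> nat \<Rightarrow> real" where
  "lincomb n q c V = (\<lambda>k. if k < n then \<Sum>j<q. c j * V j k else 0)"

lemma Rn_eqI:
  assumes "x \<in> Rn n" "y \<in> Rn n" "\<And>k. k < n \<Longrightarrow> x k = y k"
  shows "x = y"
proof
  fix k show "x k = y k"
    using assms unfolding Rn_def by (cases "k < n") auto
qed

lemma Rn_diff: "x \<in> Rn n \<Longrightarrow> y \<in> Rn n \<Longrightarrow> (\<lambda>k. x k - y k) \<in> Rn n"
  by (simp add: Rn_def)

lemma diff_eq_0_fun: "(\<lambda>k. x k - y k) = (\<lambda>_. 0) \<longleftrightarrow> x = (y :: nat \<Rightarrow> real)"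
  by (auto simp: fun_eq_iff)

lemma dotp_add_right: "dotp n a (\<lambda>k. x k + y k) = dotp n a x + dotp n a y"
  by (simp add: distrib_left sum.distrib)

lemma dotp_add_scaled_right:
  "dotp n a (\<lambda>k. x k + t * y k) = dotp n a x + t * dotp n a y"
  by (simp add: distrib_left sum.distrib sum_distrib_left mult.left_commute)

lemma dotp_scale_right: "dotp n a (\<lambda>k. t * x k) = t * dotp n a x"
  by (simp add: sum_distrib_left mult.left_commute)

lemma dotp_diff_right: "dotp n a (\<lambda>k. x k - y k) = dotp n a x - dotp n a y"
  by (simp add: right_diff_distrib sum_subtractf)

lemma dotp_diff_scaled:
  "dotp n (\<lambda>k. x k - t * y k) z = dotp n x z - t * dotp n y z"
  by (simp add: left_diff_distrib sum_subtractf sum_distrib_left mult.assoc)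

lemma dotp_self_eq_0_imp:
  assumes "dotp n x x = 0" "k < n"
  shows "x k = 0"
  using assms by (subst (asm) sum_nonneg_eq_0_iff) auto

lemma dotp_self_eq_0_iff:
  assumes "x \<in> Rn n"
  shows "dotp n x x = 0 \<longleftrightarrow> x = (\<lambda>_. 0)"
proof
  assume "dotp n x x = 0"
  then have "\<forall>k<n. x k * x k = 0" by (subst (asm) sum_nonneg_eq_0_iff) auto
  then show "x = (\<lambda>_. 0)" by (intro Rn_eqI[OF assms]) (auto simp: Rn_def)
qed simp

lemma lincomb_in_Rn: "lincomb n q c V \<in> Rn n"
  by (simp add: lincomb_def Rn_def)

lemma lincomb_divide: "lincomb n q c (\<lambda>j k. W j k / lam) = (\<lambda>k. lincomb n q c W k / lam)"
  by (simp add: lincomb_def sum_divide_distrib fun_eq_iff)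

lemma dotp_lincomb: "dotp n a (lincomb n q c V) = (\<Sum>j<q. c j * dotp n a (V j))"
proof -
  have "dotp n a (lincomb n q c V) = (\<Sum>k<n. \<Sum>j<q. c j * (a k * V j k))"
    by (simp add: lincomb_def sum_distrib_left mult_ac)
  also have "\<dots> = (\<Sum>j<q. c j * dotp n a (V j))"
    by (subst sum.swap) (simp add: sum_distrib_left)
  finally show ?thesis .
qed

lemma dotp_lincomb_left: "dotp n (lincomb n q c V) a = (\<Sum>j<q. c j * dotp n (V j) a)"
  using dotp_lincomb[where a=a and n=n and q=q and c=c and V=V] by (simp add: mult.commute)

lemma dotp_lincomb_eq_0:
  assumes "\<forall>k<n. (\<Sum>j<q. c j * V j k) = 0"
  shows "dotp n (lincomb n q c V) x = 0"
  using assms by (simp add: lincomb_def)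

lemma weighted_sum_affine_dotp:
  "(\<Sum>i<p. c i * (a - dotp n x (V i))) = (\<Sum>i<p. c i) * a - dotp n x (lincomb n p c V)"
  by (simp add: dotp_lincomb right_diff_distrib sum_subtractf sum_distrib_right)

lemma sum_lessThan_Suc_case_nat:
  "(\<Sum>k<Suc n. h k * case_nat a f k) = h 0 * a + dotp n (\<lambda>k. h (Suc k)) f"
  by (subst sum.lessThan_Suc_shift) simp

lemma orthogonal_decomposition:
  fixes b :: "nat \<Rightarrow> nat \<Rightarrow> real"
  shows "\<exists>c r. (\<forall>k<N. e k = lincomb N q c b k + r k) \<and> (\<forall>j<q. dotp N r (b j) = 0)"
proof (induction q arbitrary: e)
  case 0
  show ?case by (rule exI[of _ "\<lambda>_. 0"], rule exI[of _ e]) (simp add: lincomb_def)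
next
  case (Suc q)
  obtain c r where e: "\<forall>k<N. e k = lincomb N q c b k + r k"
    and r: "\<forall>j<q. dotp N r (b j) = 0" using Suc.IH[of e] by blast
  obtain c' r' where bq: "\<forall>k<N. b q k = lincomb N q c' b k + r' k"
    and r': "\<forall>j<q. dotp N r' (b j) = 0" using Suc.IH[of "b q"] by blast
  define D where "D = dotp N r' r'"
  \<comment> \<open>Gram--Schmidt step: remove from r its component along the new residual r'\<close>
  define t where "t = (if D = 0 then 0 else dotp N r r' / D)"
  have rr': "dotp N r r' = t * D"
  proof (cases "D = 0")
    case True
    then have "\<forall>k<N. r' k = 0" using dotp_self_eq_0_imp unfolding D_def by blast
    then show ?thesis using True by simp
  qed (simp add: t_def)
  define r'' where "r'' = (\<lambda>k. r k - t * r' k)"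
  define c'' where "c'' = (\<lambda>j. if j = q then t else c j - t * c' j)"
  have "e k = lincomb N (Suc q) c'' b k + r'' k" if "k < N" for k
  proof -
    have "lincomb N (Suc q) c'' b k = lincomb N q c b k - t * lincomb N q c' b k + t * b q k"
      using that by (simp add: lincomb_def c''_def algebra_simps sum_subtractf sum_distrib_left)
    then show ?thesis using e bq that by (simp add: r''_def algebra_simps)
  qed
  moreover have r''_orth: "dotp N r'' (b j) = 0" if "j < q" for j
    using r r' that by (simp add: r''_def dotp_diff_scaled)
  have "dotp N r'' (b q) = 0"
  proof -
    have "dotp N r'' (b q) = dotp N r'' (lincomb N q c' b) + dotp N r'' r'"
      using bq by (simp add: sum.distrib[symmetric] distrib_left lincomb_def)
    also have "dotp N r'' (lincomb N q c' b) = 0"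
      using r''_orth by (simp add: dotp_lincomb)
    also have "dotp N r'' r' = dotp N r r' - t * D"
      by (simp add: r''_def D_def dotp_diff_scaled)
    finally show ?thesis using rr' by simp
  qed
  ultimately show ?case
    using r''_orth by (intro exI[of _ c''] exI[of _ r'']) (auto simp: less_Suc_eq)
qed

lemma lincomb_if_orthogonal_complement:
  fixes b :: "nat \<Rightarrow> nat \<Rightarrow> real"
  assumes "\<And>h. \<forall>j<q. dotp N h (b j) = 0 \<Longrightarrow> dotp N h e = 0"
  shows "\<exists>c. \<forall>k<N. e k = (\<Sum>j<q. c j * b j k)"
proof -
  obtain c r where e: "\<forall>k<N. e k = lincomb N q c b k + r k"
    and r: "\<forall>j<q. dotp N r (b j) = 0" using orthogonal_decomposition by blast
  have "dotp N r r = dotp N r e - dotp N r (lincomb N q c b)"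
    using e by (simp add: sum_subtractf[symmetric] algebra_simps lincomb_def)
  also have "\<dots> = 0" using assms[OF r] r by (simp add: dotp_lincomb)
  finally have "\<forall>k<N. r k = 0" using dotp_self_eq_0_imp by blast
  then show ?thesis using e by (auto simp: lincomb_def)
qed

lemma conv_rows_iff:
  "x \<in> conv_rows n p V \<longleftrightarrow>
     (\<exists>l. (\<forall>i<p. 0 \<le> l i) \<and> (\<Sum>i<p. l i) = 1 \<and> x = lincomb n p l V)"
proof
  assume "x \<in> conv_rows n p V"
  then obtain l where l: "\<forall>i<p. 0 \<le> l i" "(\<Sum>i<p. l i) = 1" "\<forall>k<n. x k = (\<Sum>i<p. l i * V i k)"
    and x: "x \<in> Rn n" unfolding conv_rows_def by blast
  have "x = lincomb n p l V"
    by (rule Rn_eqI[OF x lincomb_in_Rn]) (simp add: l(3) lincomb_def)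
  then show "\<exists>l. (\<forall>i<p. 0 \<le> l i) \<and> (\<Sum>i<p. l i) = 1 \<and> x = lincomb n p l V" using l by blast
qed (auto simp: conv_rows_def lincomb_def Rn_def)

lemma conv_rows_coord_bound:
  assumes "x \<in> conv_rows n p V"
  shows "\<bar>x k\<bar> \<le> (\<Sum>i<p. \<bar>V i k\<bar>)"
proof -
  obtain l where l: "\<forall>i<p. 0 \<le> l i" "(\<Sum>i<p. l i) = 1" and x: "x = lincomb n p l V"
    using assms unfolding conv_rows_iff by blast
  have "l i \<le> 1" if "i < p" for i
    using member_le_sum[of i "{..<p}" l] l that by simp
  then have "\<bar>l i * V i k\<bar> \<le> \<bar>V i k\<bar>" if "i < p" for i
    using l that by (simp add: abs_mult mult_left_le_one_le)
  then have "\<bar>\<Sum>i<p. l i * V i k\<bar> \<le> (\<Sum>i<p. \<bar>V i k\<bar>)"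
    by (rule order_trans[OF sum_abs sum_mono]) simp
  then show ?thesis by (simp add: x lincomb_def sum_nonneg)
qed

lemma ineq_set_add_recession:
  assumes "a \<in> ineq_set n q W w" "d \<in> Rn n" "\<forall>j<q. dotp n (W j) d \<le> 0" "0 \<le> t"
  shows "(\<lambda>k. a k + t * d k) \<in> ineq_set n q W w"
proof -
  have "dotp n (W j) a + t * dotp n (W j) d \<le> w j" if "j < q" for j
    using assms that mult_nonneg_nonpos[of t "dotp n (W j) d"] by (force simp: ineq_set_def)
  then show ?thesis using assms by (simp add: ineq_set_def Rn_def dotp_add_scaled_right)
qed

lemma recession_direction_eq_0:
  assumes P: "conv_rows n p V = ineq_set n q W w" and a: "a \<in> ineq_set n q W w"
    and d: "d \<in> Rn n" and Wd: "\<forall>j<q. dotp n (W j) d \<le> 0"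
  shows "d = (\<lambda>_. 0)"
proof (rule ccontr)
  assume "d \<noteq> (\<lambda>_. 0)"
  then obtain k where k: "d k \<noteq> 0" by auto
  define B where "B = (\<Sum>i<p. \<bar>V i k\<bar>)"
  define t where "t = (B + \<bar>a k\<bar> + 1) / \<bar>d k\<bar>"
  have "0 \<le> B" by (simp add: B_def sum_nonneg)
  then have "0 \<le> t" by (simp add: t_def)
  then have "(\<lambda>k. a k + t * d k) \<in> conv_rows n p V"
    using ineq_set_add_recession[OF a d Wd] P by simp
  then have "\<bar>a k + t * d k\<bar> \<le> B" unfolding B_def by (rule conv_rows_coord_bound)
  moreover have "t * \<bar>d k\<bar> = B + \<bar>a k\<bar> + 1" using k by (simp add: t_def)
  ultimately show False using \<open>0 \<le> t\<close> by (simp add: abs_mult)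
qed

lemma tight_point_unique:
  assumes P: "conv_rows n p V = ineq_set n q W w" and x: "x \<in> Rn n"
    and tight: "\<forall>j<q. dotp n (W j) x = w j" and v: "v \<in> ineq_set n q W w"
  shows "v = x"
proof -
  have "x \<in> ineq_set n q W w" using x tight by (simp add: ineq_set_def)
  moreover have "\<forall>j<q. dotp n (W j) (\<lambda>k. v k - x k) \<le> 0"
    using v tight by (simp add: ineq_set_def dotp_diff_right)
  moreover have "(\<lambda>k. v k - x k) \<in> Rn n" using v x by (simp add: ineq_set_def Rn_diff)
  ultimately show ?thesis using recession_direction_eq_0[OF P] diff_eq_0_fun by metis
qed

lemma ineq_set_rows_pos:
  assumes P: "conv_rows n p V = ineq_set n q W w" and dim: "dim_ge_1 (ineq_set n q W w)"
  shows "0 < q"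
proof (rule ccontr)
  assume "\<not> 0 < q"
  obtain a where a: "a \<in> ineq_set n q W w" using dim unfolding dim_ge_1_def by blast
  then have "a \<in> Rn n" by (simp add: ineq_set_def)
  then have "\<forall>v \<in> ineq_set n q W w. v = a"
    using tight_point_unique[OF P] \<open>\<not> 0 < q\<close> by blast
  then show False using dim unfolding dim_ge_1_def by metis
qed

lemma dim_ge_1_imp_pos:
  assumes "P \<subseteq> Rn n" "dim_ge_1 P"
  shows "0 < n"
proof (rule ccontr)
  assume "\<not> 0 < n"
  obtain a b where "a \<in> P" "b \<in> P" "a \<noteq> b" using assms(2) unfolding dim_ge_1_def by blast
  moreover have "a = b" if "a \<in> Rn n" "b \<in> Rn n" using Rn_eqI[OF that] \<open>\<not> 0 < n\<close> by simp
  ultimately show False using assms(1) by blast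
qed

lemma rows_affinely_span:
  assumes P: "conv_rows n p V = ineq_set n q W w" and a: "a \<in> ineq_set n q W w" and "0 < q"
  shows "\<exists>al. (\<Sum>j<q. al j) = 1 \<and> (\<forall>k<n. z k = (\<Sum>j<q. al j * W j k))"
proof -
  define b where "b = (\<lambda>j. case_nat 1 (W j))"
  define e where "e = case_nat 1 z"
  have "dotp (Suc n) h e = 0" if h: "\<forall>j<q. dotp (Suc n) h (b j) = 0" for h
  proof -
    define d where "d = (\<lambda>k. if k < n then h (Suc k) else 0)"
    have "d \<in> Rn n" by (simp add: d_def Rn_def)
    have Wd: "dotp n (W j) d = - h 0" if "j < q" for j
    proof -
      have "h 0 + dotp n (\<lambda>k. h (Suc k)) (W j) = 0"
        using h that unfolding b_def sum_lessThan_Suc_case_nat by simp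
      then show ?thesis by (simp add: d_def mult.commute)
    qed
    \<comment> \<open>d or -d is a recession direction, depending on the sign of h 0\<close>
    have "d = (\<lambda>_. 0)"
    proof (cases "0 \<le> h 0")
      case True
      then show ?thesis using recession_direction_eq_0[OF P a \<open>d \<in> Rn n\<close>] Wd by simp
    next
      case False
      have "(\<lambda>k. - d k) \<in> Rn n" using \<open>d \<in> Rn n\<close> by (simp add: Rn_def)
      moreover have "\<forall>j<q. dotp n (W j) (\<lambda>k. - d k) \<le> 0" using Wd False by (simp add: sum_negf)
      ultimately have "(\<lambda>k. - d k) = (\<lambda>_. 0)" by (rule recession_direction_eq_0[OF P a])
      then show ?thesis by (simp add: fun_eq_iff)
    qed
    then have "\<forall>k<n. h (Suc k) = 0" unfolding d_def by (metis (full_types))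
    moreover have "h 0 = 0" using Wd[OF \<open>0 < q\<close>] \<open>d = (\<lambda>_. 0)\<close> by simp
    ultimately show ?thesis unfolding e_def sum_lessThan_Suc_case_nat by simp
  qed
  then obtain al where al: "\<forall>k<Suc n. e k = (\<Sum>j<q. al j * b j k)"
    using lincomb_if_orthogonal_complement[where N="Suc n" and b=b and e=e] by blast
  show ?thesis
    using al[rule_format, of 0] al[rule_format, of "Suc _"] by (auto simp: b_def e_def)
qed

lemma is_slack_matrix_ofI:
  assumes "P = conv_rows n p V" "P = ineq_set n q W w" "dim_ge_1 P"
    and "\<forall>i<p. \<forall>j<q. S i j = w j - dotp n (W j) (V i)"
  shows "is_slack_matrix_of n P p q S"
proof -
  have "P \<subseteq> Rn n" using assms(2) by (auto simp: ineq_set_def)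
  then show ?thesis unfolding is_slack_matrix_of_def using assms by blast
qed

lemma unit_in_row_span:
  assumes P: "conv_rows n p V = ineq_set n q W w" and dim: "dim_ge_1 (ineq_set n q W w)"
  shows "\<exists>u. (\<Sum>j<q. u j * w j) = 1 \<and> (\<forall>k<n. (\<Sum>j<q. u j * W j k) = 0)"
proof -
  define b where "b = (\<lambda>j. case_nat (w j) (W j))"
  define e :: "nat \<Rightarrow> real" where "e = case_nat 1 (\<lambda>_. 0)"
  have "dotp (Suc n) h e = 0" if h: "\<forall>j<q. dotp (Suc n) h (b j) = 0" for h
  proof (rule ccontr)
    assume "dotp (Suc n) h e \<noteq> 0"
    then have "h 0 \<noteq> 0" unfolding e_def sum_lessThan_Suc_case_nat by simp
    \<comment> \<open>dehomogenising h gives a point where every inequality is tight, which would be all of P\<close>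
    define x where "x = (\<lambda>k. if k < n then - h (Suc k) / h 0 else 0)"
    have "x \<in> Rn n" by (simp add: x_def Rn_def)
    moreover have "\<forall>j<q. dotp n (W j) x = w j"
    proof (intro allI impI)
      fix j assume "j < q"
      then have "dotp n (\<lambda>k. h (Suc k)) (W j) = - (h 0 * w j)"
        using h unfolding b_def sum_lessThan_Suc_case_nat by (simp add: add_eq_0_iff2)
      moreover have "dotp n (W j) x = - dotp n (\<lambda>k. h (Suc k)) (W j) / h 0"
        by (simp add: x_def sum_divide_distrib sum_negf[symmetric] mult.commute)
      ultimately show "dotp n (W j) x = w j" using \<open>h 0 \<noteq> 0\<close> by simp
    qed
    ultimately have "\<forall>v \<in> ineq_set n q W w. v = x" using tight_point_unique[OF P] by blast
    then show False using dim unfolding dim_ge_1_def by metis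
  qed
  then obtain u where u: "\<forall>k<Suc n. e k = (\<Sum>j<q. u j * b j k)"
    using lincomb_if_orthogonal_complement[where N="Suc n" and b=b and e=e] by blast
  show ?thesis
    using u[rule_format, of 0] u[rule_format, of "Suc _"] by (auto simp: b_def e_def)
qed

lemma ones_in_column_space:
  assumes "is_slack_matrix_of n P p q S"
  shows "\<exists>u. \<forall>i<p. (\<Sum>j<q. S i j * u j) = 1"
proof -
  obtain V W w where P: "conv_rows n p V = ineq_set n q W w" "P = ineq_set n q W w"
    and dim: "dim_ge_1 P" and S: "\<forall>i<p. \<forall>j<q. S i j = w j - dotp n (W j) (V i)"
    using assms unfolding is_slack_matrix_of_def by metis
  obtain u where u1: "(\<Sum>j<q. u j * w j) = 1" and u0: "\<forall>k<n. (\<Sum>j<q. u j * W j k) = 0"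
    using unit_in_row_span[OF P(1)] dim P(2) by blast
  have "(\<Sum>j<q. S i j * u j) = 1" if "i < p" for i
  proof -
    have "(\<Sum>j<q. S i j * u j) = (\<Sum>j<q. u j * w j - u j * dotp n (W j) (V i))"
      using S that by (intro sum.cong) (auto simp: right_diff_distrib mult.commute)
    also have "\<dots> = (\<Sum>j<q. u j * w j) - dotp n (lincomb n q u W) (V i)"
      by (simp add: sum_subtractf dotp_lincomb_left)
    also have "dotp n (lincomb n q u W) (V i) = 0" by (rule dotp_lincomb_eq_0[OF u0])
    finally show ?thesis using u1 by simp
  qed
  then show ?thesis by blast
qed

lemma equal_slack_point:
  assumes P: "conv_rows n p V = ineq_set n q W w" and dim: "dim_ge_1 (ineq_set n q W w)"
    and M: "\<forall>i<p. \<forall>j<q. M i j = w j - dotp n (W j) (V i)"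
    and c: "\<forall>j<q. (\<Sum>i<p. M i j * c i) = 1"
  shows "\<exists>x0 lam. x0 \<in> Rn n \<and> 0 < lam \<and> (\<forall>j<q. w j - dotp n (W j) x0 = lam)"
proof -
  define z0 where "z0 = (\<Sum>i<p. c i)"
  define z where "z = lincomb n p c V"
  have key: "z0 * w j - dotp n (W j) z = 1" if "j < q" for j
  proof -
    have "(\<Sum>i<p. M i j * c i) = (\<Sum>i<p. c i * (w j - dotp n (W j) (V i)))"
      using M that by (intro sum.cong) (auto simp: ac_simps)
    then show ?thesis using c that unfolding weighted_sum_affine_dotp z0_def z_def by simp
  qed
  obtain a where a: "a \<in> ineq_set n q W w" using dim unfolding dim_ge_1_def by blast
  have "z0 \<noteq> 0"
  proof
    assume "z0 = 0"
    then have "\<forall>j<q. dotp n (W j) z = -1" using key by simp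
    then have "z = (\<lambda>_. 0)"
      using recession_direction_eq_0[OF P a] lincomb_in_Rn by (simp add: z_def)
    then show False using \<open>\<forall>j<q. dotp n (W j) z = -1\<close> ineq_set_rows_pos[OF P dim] by auto
  qed
  define x0 where "x0 = (\<lambda>k. z k / z0)"
  define lam where "lam = 1 / z0"
  have x0: "x0 \<in> Rn n" using lincomb_in_Rn by (simp add: x0_def z_def Rn_def)
  have lam: "w j - dotp n (W j) x0 = lam" if "j < q" for j
  proof -
    have "dotp n (W j) x0 = dotp n (W j) z / z0" by (simp add: x0_def sum_divide_distrib)
    then show ?thesis using key[OF that] \<open>z0 \<noteq> 0\<close> by (simp add: lam_def field_simps)
  qed
  have "0 < lam"
  proof (rule ccontr)
    assume "\<not> 0 < lam"
    \<comment> \<open>then every point of the polytope minus x0 would be a recession direction\<close>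
    have "v = x0" if v: "v \<in> ineq_set n q W w" for v
    proof -
      have "\<forall>j<q. dotp n (W j) (\<lambda>k. v k - x0 k) \<le> 0"
        using v lam \<open>\<not> 0 < lam\<close> by (force simp: dotp_diff_right ineq_set_def)
      moreover have "(\<lambda>k. v k - x0 k) \<in> Rn n" using v x0 by (simp add: ineq_set_def Rn_diff)
      ultimately show ?thesis using recession_direction_eq_0[OF P v] diff_eq_0_fun by metis
    qed
    then show False using dim unfolding dim_ge_1_def by metis
  qed
  then show ?thesis using x0 lam by blast
qed

lemma conv_rows_translate:
  assumes "x0 \<in> Rn n"
  shows "x \<in> conv_rows n p (\<lambda>i k. V i k - x0 k) \<longleftrightarrow>
    x \<in> Rn n \<and> (\<lambda>k. x k + x0 k) \<in> conv_rows n p V"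
proof -
  have "(\<forall>k<n. x k = (\<Sum>i<p. l i * (V i k - x0 k))) \<longleftrightarrow>
      (\<forall>k<n. x k + x0 k = (\<Sum>i<p. l i * V i k))" if "(\<Sum>i<p. l i) = 1" for l
    using that by (simp add: right_diff_distrib sum_subtractf eq_diff_eq flip: sum_distrib_right)
  moreover have "(\<lambda>k. x k + x0 k) \<in> Rn n \<longleftrightarrow> x \<in> Rn n" using assms by (auto simp: Rn_def)
  ultimately show ?thesis unfolding conv_rows_def by blast
qed

lemma ineq_set_translate:
  assumes "x0 \<in> Rn n" and "\<forall>j<q. w' j = w j - dotp n (W j) x0"
  shows "x \<in> ineq_set n q W w' \<longleftrightarrow> x \<in> Rn n \<and> (\<lambda>k. x k + x0 k) \<in> ineq_set n q W w"
proof -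
  have "(\<lambda>k. x k + x0 k) \<in> Rn n \<longleftrightarrow> x \<in> Rn n" using assms by (auto simp: Rn_def)
  then show ?thesis using assms(2) by (auto simp: ineq_set_def dotp_add_right le_diff_eq)
qed

lemma normalized_slack_representation:
  assumes S: "is_slack_matrix_of n P p q M" and c: "\<forall>j<q. (\<Sum>i<p. M i j * c i) = 1"
  shows "\<exists>X W lam. 0 < lam \<and> conv_rows n p X = ineq_set n q W (\<lambda>_. lam) \<and>
    dim_ge_1 (ineq_set n q W (\<lambda>_. lam)) \<and> (\<forall>i<p. \<forall>j<q. M i j = lam - dotp n (W j) (X i))"
proof -
  obtain V W w where P: "conv_rows n p V = ineq_set n q W w" "P = ineq_set n q W w"
    and dim: "dim_ge_1 P" and M: "\<forall>i<p. \<forall>j<q. M i j = w j - dotp n (W j) (V i)"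
    using S unfolding is_slack_matrix_of_def by metis
  obtain x0 lam where x0: "x0 \<in> Rn n" and "0 < lam" and lam: "\<forall>j<q. w j - dotp n (W j) x0 = lam"
    using equal_slack_point[OF P(1) _ M c] dim P(2) by blast
  define X where "X = (\<lambda>i k. V i k - x0 k)"
  have translate: "x \<in> ineq_set n q W (\<lambda>_. lam) \<longleftrightarrow> x \<in> Rn n \<and> (\<lambda>k. x k + x0 k) \<in> P" for x
    using ineq_set_translate[OF x0] lam P(2) by simp
  have "x \<in> conv_rows n p X \<longleftrightarrow> x \<in> ineq_set n q W (\<lambda>_. lam)" for x
    unfolding X_def conv_rows_translate[OF x0] translate P(1) P(2) ..
  then have "conv_rows n p X = ineq_set n q W (\<lambda>_. lam)" by blast
  moreover have "dim_ge_1 (ineq_set n q W (\<lambda>_. lam))"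
  proof -
    obtain a b where "a \<in> P" "b \<in> P" "a \<noteq> b" using dim unfolding dim_ge_1_def by blast
    then have "(\<lambda>k. a k - x0 k) \<noteq> (\<lambda>k. b k - x0 k)" by (auto simp: fun_eq_iff)
    moreover have "(\<lambda>k. a k - x0 k) \<in> ineq_set n q W (\<lambda>_. lam)" if "a \<in> P" for a
      using that translate x0 P(2) by (simp add: ineq_set_def Rn_diff)
    ultimately show ?thesis unfolding dim_ge_1_def using \<open>a \<in> P\<close> \<open>b \<in> P\<close> by blast
  qed
  moreover have "M i j = lam - dotp n (W j) (X i)" if "i < p" "j < q" for i j
  proof -
    have "dotp n (W j) (X i) = dotp n (W j) (V i) - dotp n (W j) x0"
      by (simp add: X_def dotp_diff_right)
    then show ?thesis using M[rule_format, OF that] lam[rule_format, OF that(2)] by linarith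
  qed
  ultimately show ?thesis using \<open>0 < lam\<close> by blast
qed

lemma coord_le_norm:
  fixes x :: "nat \<Rightarrow> real"
  assumes "k < n"
  shows "\<bar>x k\<bar> \<le> sqrt (\<Sum>k<n. (x k)\<^sup>2)"
proof -
  have "(x k)\<^sup>2 \<le> (\<Sum>k<n. (x k)\<^sup>2)" by (rule member_le_sum) (use assms in auto)
  then show ?thesis using real_sqrt_le_mono by fastforce
qed

lemma zero_in_interior_ineq_set:
  assumes "0 < lam"
  shows "zero_in_interior n (ineq_set n q W (\<lambda>_. lam))"
proof -
  define C where "C = 1 + (\<Sum>j<q. \<Sum>k<n. \<bar>W j k\<bar>)"
  have "1 \<le> C" by (simp add: C_def sum_nonneg)
  have "x \<in> ineq_set n q W (\<lambda>_. lam)" if x: "x \<in> Rn n" "sqrt (\<Sum>k<n. (x k)\<^sup>2) < lam / C" for x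
  proof -
    have "dotp n (W j) x \<le> lam" if "j < q" for j
    proof -
      have "dotp n (W j) x \<le> (\<Sum>k<n. \<bar>W j k\<bar> * (lam / C))"
      proof (rule sum_mono)
        fix k assume "k \<in> {..<n}"
        then have "\<bar>x k\<bar> \<le> lam / C" using coord_le_norm[where x=x and k=k and n=n] x(2) by simp
        then have "\<bar>W j k\<bar> * \<bar>x k\<bar> \<le> \<bar>W j k\<bar> * (lam / C)" by (rule mult_left_mono) simp
        then show "W j k * x k \<le> \<bar>W j k\<bar> * (lam / C)" by (simp add: abs_mult[symmetric])
      qed
      also have "\<dots> = (\<Sum>k<n. \<bar>W j k\<bar>) * (lam / C)" by (rule sum_distrib_right[symmetric])
      also have "\<dots> \<le> C * (lam / C)"
      proof (rule mult_right_mono)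
        have "(\<Sum>k<n. \<bar>W j k\<bar>) \<le> (\<Sum>j<q. \<Sum>k<n. \<bar>W j k\<bar>)"
          by (rule member_le_sum) (use that in \<open>auto simp: sum_nonneg\<close>)
        then show "(\<Sum>k<n. \<bar>W j k\<bar>) \<le> C" by (simp add: C_def)
      qed (use assms \<open>1 \<le> C\<close> in simp)
      finally show ?thesis using \<open>1 \<le> C\<close> by simp
    qed
    then show ?thesis using x by (simp add: ineq_set_def)
  qed
  moreover have "0 < lam / C" using assms \<open>1 \<le> C\<close> by simp
  ultimately show ?thesis unfolding zero_in_interior_def by blast
qed

lemma orthogonal_to_rows_eq_0:
  assumes zi: "zero_in_interior n (conv_rows n p X)" and h: "h \<in> Rn n"
    and orth: "\<forall>i<p. dotp n (X i) h = 0"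
  shows "h = (\<lambda>_. 0)"
proof -
  obtain e where "0 < e" and ball: "\<forall>x\<in>Rn n. sqrt (\<Sum>k<n. (x k)\<^sup>2) < e \<longrightarrow> x \<in> conv_rows n p X"
    using zi unfolding zero_in_interior_def by blast
  define s where "s = sqrt (\<Sum>k<n. (h k)\<^sup>2)"
  have "0 \<le> s" by (simp add: s_def sum_nonneg)
  define t where "t = e / (s + 1)"
  have "0 < t" using \<open>0 < e\<close> \<open>0 \<le> s\<close> by (simp add: t_def)
  have "sqrt (\<Sum>k<n. (t * h k)\<^sup>2) = t * s"
    using \<open>0 < t\<close> by (simp add: s_def power_mult_distrib real_sqrt_mult flip: sum_distrib_left)
  also have "\<dots> < e"
    using \<open>0 < e\<close> \<open>0 \<le> s\<close> by (simp add: t_def field_simps)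
  finally have "(\<lambda>k. t * h k) \<in> conv_rows n p X"
    using ball h by (simp add: Rn_def)
  then obtain l where l: "(\<lambda>k. t * h k) = lincomb n p l X" unfolding conv_rows_iff by blast
  have "t * dotp n h h = dotp n (\<lambda>k. t * h k) h" by (simp add: sum_distrib_left mult.assoc)
  also have "\<dots> = dotp n (lincomb n p l X) h" by (simp add: l[symmetric])
  also have "\<dots> = (\<Sum>i<p. l i * dotp n (X i) h)" by (rule dotp_lincomb_left)
  also have "\<dots> = 0" using orth by simp
  finally show ?thesis using \<open>0 < t\<close> dotp_self_eq_0_iff[OF h] by simp
qed

lemma polar_conv_rows: "polar n (conv_rows n p X) = ineq_set n p X (\<lambda>_. 1)"
proof (intro set_eqI iffI)
  fix y assume y: "y \<in> polar n (conv_rows n p X)"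
  have "dotp n (X i) y \<le> 1" if "i < p" for i
  proof -
    define l :: "nat \<Rightarrow> real" where "l = (\<lambda>i'. of_bool (i' = i))"
    have "lincomb n p l X \<in> conv_rows n p X"
      unfolding conv_rows_iff using that by (intro exI[of _ l]) (auto simp: l_def)
    then have "dotp n (lincomb n p l X) y \<le> 1" using y unfolding polar_def by blast
    then show ?thesis using that by (simp add: dotp_lincomb_left l_def)
  qed
  then show "y \<in> ineq_set n p X (\<lambda>_. 1)" using y unfolding polar_def ineq_set_def by blast
next
  fix y assume y: "y \<in> ineq_set n p X (\<lambda>_. 1)"
  have "dotp n x y \<le> 1" if hx: "x \<in> conv_rows n p X" for x
  proof -
    obtain l where l: "\<forall>i<p. 0 \<le> l i" "(\<Sum>i<p. l i) = 1" and x: "x = lincomb n p l X"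
      using hx unfolding conv_rows_iff by blast
    have "dotp n x y = (\<Sum>i<p. l i * dotp n (X i) y)" by (simp add: x dotp_lincomb_left)
    also have "\<dots> \<le> (\<Sum>i<p. l i * 1)"
      using l y by (intro sum_mono mult_left_mono) (auto simp: ineq_set_def)
    finally show ?thesis using l by simp
  qed
  then show "y \<in> polar n (conv_rows n p X)" using y unfolding polar_def ineq_set_def by blast
qed

lemma ineq_set_scale:
  assumes "0 < lam"
  shows "ineq_set n q (\<lambda>j k. lam * W j k) (\<lambda>j. lam * w j) = ineq_set n q W w"
  using assms by (simp add: ineq_set_def mult.assoc flip: sum_distrib_left)

lemma dim_ge_1_polar_conv_rows:
  assumes "0 < n"
  shows "dim_ge_1 (polar n (conv_rows n p X))"
proof -
  define B where "B = 1 + (\<Sum>i<p. \<bar>X i 0\<bar>)"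
  have "1 \<le> B" by (simp add: B_def sum_nonneg)
  define y :: "nat \<Rightarrow> real" where "y = (\<lambda>k. if k = 0 then 1 / B else 0)"
  have "dotp n (X i) y \<le> 1" if "i < p" for i
  proof -
    have "dotp n (X i) y = X i 0 / B"
      using assms by (simp add: y_def if_distrib[of "\<lambda>a. _ * a"] cong: if_cong)
    also have "\<dots> \<le> B / B"
      using member_le_sum[of i "{..<p}" "\<lambda>i. \<bar>X i 0\<bar>"] that \<open>1 \<le> B\<close>
      by (intro divide_right_mono) (auto simp: B_def)
    finally show ?thesis using \<open>1 \<le> B\<close> by simp
  qed
  then have "y \<in> polar n (conv_rows n p X)"
    using assms by (simp add: polar_conv_rows ineq_set_def Rn_def y_def)
  moreover have "(\<lambda>_. 0) \<in> polar n (conv_rows n p X)"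
    by (simp add: polar_conv_rows ineq_set_def Rn_def)
  moreover have "y \<noteq> (\<lambda>_. 0)" using \<open>1 \<le> B\<close> by (auto simp: y_def fun_eq_iff)
  ultimately show ?thesis unfolding dim_ge_1_def by blast
qed

lemma conv_rows_subset_polar:
  assumes "0 < lam" and WX: "\<forall>i<p. \<forall>j<q. dotp n (W j) (X i) \<le> lam"
  shows "conv_rows n q (\<lambda>j k. W j k / lam) \<subseteq> polar n (conv_rows n p X)"
proof
  fix y assume "y \<in> conv_rows n q (\<lambda>j k. W j k / lam)"
  then obtain l where l: "\<forall>j<q. 0 \<le> l j" "(\<Sum>j<q. l j) = 1"
    and y: "y = lincomb n q l (\<lambda>j k. W j k / lam)" unfolding conv_rows_iff by blast
  have "dotp n (X i) y \<le> 1" if "i < p" for i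
  proof -
    have "dotp n (X i) (\<lambda>k. W j k / lam) \<le> 1" if "j < q" for j
    proof -
      have "dotp n (X i) (\<lambda>k. W j k / lam) = dotp n (W j) (X i) / lam"
        by (simp add: sum_divide_distrib mult.commute)
      then show ?thesis using WX \<open>i < p\<close> that \<open>0 < lam\<close> by simp
    qed
    then have "(\<Sum>j<q. l j * dotp n (X i) (\<lambda>k. W j k / lam)) \<le> (\<Sum>j<q. l j * 1)"
      using l(1) by (intro sum_mono mult_left_mono) auto
    then show ?thesis using l(2) by (simp add: y dotp_lincomb)
  qed
  then show "y \<in> polar n (conv_rows n p X)"
    by (simp add: polar_conv_rows ineq_set_def y lincomb_in_Rn)
qed

lemma polar_subset_conv_rows:
  assumes "0 < lam" and P: "conv_rows n p X = ineq_set n q W (\<lambda>_. lam)" and "0 < q"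
    and MX: "\<forall>i<p. \<forall>j<q. M i j = lam - dotp n (W j) (X i)"
    and SQ: "is_slack_matrix_of m Q q p (transp_mat M)"
  shows "polar n (conv_rows n p X) \<subseteq> conv_rows n q (\<lambda>j k. W j k / lam)"
proof
  fix y assume "y \<in> polar n (conv_rows n p X)"
  then have y: "y \<in> Rn n" "\<forall>i<p. dotp n (X i) y \<le> 1"
    by (simp_all add: polar_conv_rows ineq_set_def)
  obtain V2 W2 w2 where Q: "conv_rows m q V2 = ineq_set m p W2 w2"
    and MQ: "\<forall>i<p. \<forall>j<q. M i j = w2 i - dotp m (W2 i) (V2 j)"
    using SQ unfolding is_slack_matrix_of_def transp_mat_def by metis
  \<comment> \<open>both slack representations evaluate affine combinations of the columns of M alike\<close>
  have transfer: "w2 i - dotp m (W2 i) (lincomb m q \<beta> V2) = lam - dotp n (X i) (lincomb n q \<beta> W)"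
    if "(\<Sum>j<q. \<beta> j) = 1" "i < p" for \<beta> i
  proof -
    have "(\<Sum>j<q. \<beta> j * (w2 i - dotp m (W2 i) (V2 j))) = (\<Sum>j<q. \<beta> j * (lam - dotp n (X i) (W j)))"
      using MQ MX that(2) by (intro sum.cong) (auto simp: mult.commute)
    then show ?thesis using that(1) by (simp add: weighted_sum_affine_dotp)
  qed
  have "(\<lambda>_. 0) \<in> ineq_set n q W (\<lambda>_. lam)" using \<open>0 < lam\<close> by (simp add: ineq_set_def Rn_def)
  then obtain al where al: "(\<Sum>j<q. al j) = 1" "\<forall>k<n. lam * y k = (\<Sum>j<q. al j * W j k)"
    using rows_affinely_span[OF P _ \<open>0 < q\<close>, where z="\<lambda>k. lam * y k"] by blast
  have lam_y: "lincomb n q al W = (\<lambda>k. lam * y k)"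
    using al(2) y(1) by (intro Rn_eqI) (auto simp: lincomb_in_Rn lincomb_def Rn_def)
  have "dotp m (W2 i) (lincomb m q al V2) \<le> w2 i" if "i < p" for i
  proof -
    have "dotp n (X i) (\<lambda>k. lam * y k) \<le> lam" using y(2) that \<open>0 < lam\<close> by (simp add: dotp_scale_right)
    then show ?thesis using transfer[OF al(1) that] by (simp add: lam_y)
  qed
  then have "lincomb m q al V2 \<in> conv_rows m q V2"
    unfolding Q ineq_set_def using lincomb_in_Rn by blast
  then obtain \<mu> where \<mu>: "\<forall>j<q. 0 \<le> \<mu> j" "(\<Sum>j<q. \<mu> j) = 1"
    and al_mu: "lincomb m q al V2 = lincomb m q \<mu> V2" by (auto simp: conv_rows_iff)
  have "\<forall>i<p. dotp n (X i) (\<lambda>k. lincomb n q al W k - lincomb n q \<mu> W k) = 0"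
    using transfer[OF al(1)] transfer[OF \<mu>(2)] al_mu by (simp add: dotp_diff_right)
  moreover have "zero_in_interior n (conv_rows n p X)"
    using zero_in_interior_ineq_set[OF \<open>0 < lam\<close>] P by simp
  ultimately have "lincomb n q \<mu> W = (\<lambda>k. lam * y k)"
    using orthogonal_to_rows_eq_0[OF _ Rn_diff[OF lincomb_in_Rn lincomb_in_Rn]] lam_y
    unfolding diff_eq_0_fun by metis
  then have "y = lincomb n q \<mu> (\<lambda>j k. W j k / lam)"
    using \<open>0 < lam\<close> by (simp add: lincomb_divide)
  then show "y \<in> conv_rows n q (\<lambda>j k. W j k / lam)" using \<mu> unfolding conv_rows_iff by blast
qed

theorem proposition2p18:
  fixes M :: "nat \<Rightarrow> nat \<Rightarrow> real" and p q :: nat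
  assumes "\<forall>i<p. \<forall>j<q. 0 \<le> M i j"
    and "is_slack_matrix p q M"
    and "is_slack_matrix q p (transp_mat M)"
  shows "\<exists>n P. zero_in_interior n P \<and> is_slack_matrix_of n P p q M \<and>
           is_slack_matrix_of n (polar n P) q p (transp_mat M)"
proof -
  obtain m Q where SQ: "is_slack_matrix_of m Q q p (transp_mat M)"
    using assms(3) unfolding is_slack_matrix_def by blast
  obtain c where c: "\<forall>j<q. (\<Sum>i<p. M i j * c i) = 1"
    using ones_in_column_space[OF SQ] unfolding transp_mat_def by blast
  obtain n P where SP: "is_slack_matrix_of n P p q M"
    using assms(2) unfolding is_slack_matrix_def by blast
  obtain X W lam where "0 < lam" and P: "conv_rows n p X = ineq_set n q W (\<lambda>_. lam)"
    and dim: "dim_ge_1 (ineq_set n q W (\<lambda>_. lam))"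
    and MX: "\<forall>i<p. \<forall>j<q. M i j = lam - dotp n (W j) (X i)"
    using normalized_slack_representation[OF SP c] by blast
  have "0 < n" using dim_ge_1_imp_pos[OF _ dim] by (auto simp: ineq_set_def)
  have polar_V: "polar n (conv_rows n p X) = conv_rows n q (\<lambda>j k. W j k / lam)"
    using polar_subset_conv_rows[OF \<open>0 < lam\<close> P ineq_set_rows_pos[OF P dim] MX SQ]
      conv_rows_subset_polar[OF \<open>0 < lam\<close>] MX assms(1) by (intro equalityI) auto
  have polar_W: "polar n (conv_rows n p X) = ineq_set n p (\<lambda>i k. lam * X i k) (\<lambda>_. lam)"
    using ineq_set_scale[OF \<open>0 < lam\<close>, where w="\<lambda>_. 1"] by (simp add: polar_conv_rows)
  have MT: "\<forall>j<q. \<forall>i<p. transp_mat M j i = lam - dotp n (\<lambda>k. lam * X i k) (\<lambda>k. W j k / lam)"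
    using MX \<open>0 < lam\<close> by (simp add: transp_mat_def mult.commute)
  show ?thesis
  proof (intro exI conjI)
    show "zero_in_interior n (conv_rows n p X)"
      unfolding P using \<open>0 < lam\<close> by (rule zero_in_interior_ineq_set)
    show "is_slack_matrix_of n (conv_rows n p X) p q M"
      by (rule is_slack_matrix_ofI[OF refl P dim[folded P] MX])
    show "is_slack_matrix_of n (polar n (conv_rows n p X)) q p (transp_mat M)"
      by (rule is_slack_matrix_ofI[OF polar_V polar_W dim_ge_1_polar_conv_rows[OF \<open>0 < n\<close>] MT])
  qed
qed

end
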